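(* Let $\Gamma$ be a dually-closed temporal language that is preserved by $\mathrm{pp}$, $\overline{\mathrm{pp}}$, $\mathrm{lele}$, or $\overline{\mathrm{lele}}$. Then $\Gamma$ is a dually-closed Ord-Horn constraint language.
   Context: A temporal language is a relational structure with domain $\mathbb{Q}$ and finite signature whose relations are first-order definable in $(\mathbb{Q};<)$. An operation preserves $\Gamma$ if applying it componentwise to tuples of any relation of $\Gamma$ yields a tuple of that relation; $\mathrm{Pol}(\Gamma)$ is the set of such operations. Dual of $f$: $\overline{f}(x_1,\dots,x_n)=-f(-x_1,\dots,-x_n)$. $\Gamma$ is dually-closed if $f\in\mathrm{Pol}(\Gamma)$ iff $\overline{f}\in\mathrm{Pol}(\Gamma)$. $\Gamma$ is Ord-Horn if every relation is definable by a conjunction of clauses $(x_1\neq y_1\vee\dots\vee x_k\neq y_k\vee x\,R\,y)$ with $R\in\{<,\le,=\}$, where either the disjunction of disequalities or the literal $x\,R\,y$ may be omitted. $\mathrm{pp}$ is any binary operation with $\mathrm{pp}(a_1,b_1)\le\mathrm{pp}(a_2,b_2)$ iff ($a_1\le0$ and $a_1\le a_2$) or ($0<a_1$, $0<a_2$, $b_1\le b_2$). $\mathrm{lele}$ is any binary operation with $\mathrm{lele}(a_1,b_1)<\mathrm{lele}(a_2,b_2)$ whenever: $a_1\le0$ and $a_1<a_2$; or $a_1\le0$, $a_1=a_2$, $b_1<b_2$; or $a_1,a_2>0$ and $b_1<b_2$; or $a_1>0$, $b_1=b_2$, $a_1<a_2$. *)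

theory Defs
  imports Main "HOL.Rat"
begin

datatype fo =
    FLess nat nat
  | FEq nat nat
  | FNeg fo
  | FConj fo fo
  | FEx nat fo

primrec sat :: "fo \<Rightarrow> (nat \<Rightarrow> rat) \<Rightarrow> bool" where
  "sat (FLess i j) v = (v i < v j)"
| "sat (FEq i j) v = (v i = v j)"
| "sat (FNeg \<phi>) v = (\<not> sat \<phi> v)"
| "sat (FConj \<phi> \<psi>) v = (sat \<phi> v \<and> sat \<psi> v)"
| "sat (FEx x \<phi>) v = (\<exists>a. sat \<phi> (v(x := a)))"

primrec fv :: "fo \<Rightarrow> nat set" where
  "fv (FLess i j) = {i, j}"
| "fv (FEq i j) = {i, j}"
| "fv (FNeg \<phi>) = fv \<phi>"
| "fv (FConj \<phi> \<psi>) = fv \<phi> \<union> fv \<psi>"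
| "fv (FEx x \<phi>) = fv \<phi> - {x}"

text \<open>A relation is a pair (n, R) of an arity n and a set R of rational tuples
  (lists) of length n.\<close>

type_synonym relation = "nat \<times> rat list set"

definition fo_definable :: "relation \<Rightarrow> bool" where
  "fo_definable r \<longleftrightarrow> (\<exists>\<phi>. fv \<phi> \<subseteq> {..<fst r} \<and>
      snd r = {t. length t = fst r \<and> sat \<phi> (\<lambda>i. t ! i)})"

definition temporal_language :: "relation set \<Rightarrow> bool" where
  "temporal_language \<Gamma> \<longleftrightarrow> finite \<Gamma> \<and> (\<forall>r\<in>\<Gamma>. fo_definable r)"

text \<open>An m-ary operation is given as a function on argument lists (applied only to
  lists of length m).  It preserves (n,R) if applying it componentwise to any m
  tuples of R yields a tuple of R.\<close>

definition preserves_rel :: "nat \<Rightarrow> (rat list \<Rightarrow> rat) \<Rightarrow> relation \<Rightarrow> bool" where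
  "preserves_rel m f r \<longleftrightarrow>
     (\<forall>ts. length ts = m \<and> set ts \<subseteq> snd r \<longrightarrow>
        map (\<lambda>i. f (map (\<lambda>t. t ! i) ts)) [0..<fst r] \<in> snd r)"

definition preserves :: "nat \<Rightarrow> (rat list \<Rightarrow> rat) \<Rightarrow> relation set \<Rightarrow> bool" where
  "preserves m f \<Gamma> \<longleftrightarrow> (\<forall>r\<in>\<Gamma>. preserves_rel m f r)"

definition dual_op :: "(rat list \<Rightarrow> rat) \<Rightarrow> rat list \<Rightarrow> rat" where
  "dual_op f xs = - f (map uminus xs)"

definition dually_closed :: "relation set \<Rightarrow> bool" where
  "dually_closed \<Gamma> \<longleftrightarrow>
     (\<forall>m f. m \<ge> 1 \<longrightarrow> (preserves m f \<Gamma> \<longleftrightarrow> preserves m (dual_op f) \<Gamma>))"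

definition binop :: "(rat \<Rightarrow> rat \<Rightarrow> rat) \<Rightarrow> rat list \<Rightarrow> rat" where
  "binop g xs = g (xs ! 0) (xs ! 1)"

definition dual2 :: "(rat \<Rightarrow> rat \<Rightarrow> rat) \<Rightarrow> rat \<Rightarrow> rat \<Rightarrow> rat" where
  "dual2 g a b = - g (- a) (- b)"

definition is_pp :: "(rat \<Rightarrow> rat \<Rightarrow> rat) \<Rightarrow> bool" where
  "is_pp g \<longleftrightarrow> (\<forall>a1 b1 a2 b2.
     g a1 b1 \<le> g a2 b2 \<longleftrightarrow> ((a1 \<le> 0 \<and> a1 \<le> a2) \<or> (0 < a1 \<and> 0 < a2 \<and> b1 \<le> b2)))"

definition is_lele :: "(rat \<Rightarrow> rat \<Rightarrow> rat) \<Rightarrow> bool" where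
  "is_lele g \<longleftrightarrow> (\<forall>a1 b1 a2 b2.
     ((a1 \<le> 0 \<and> a1 < a2) \<or> (a1 \<le> 0 \<and> a1 = a2 \<and> b1 < b2) \<or>
      (a1 > 0 \<and> a2 > 0 \<and> b1 < b2) \<or> (a1 > 0 \<and> b1 = b2 \<and> a1 < a2))
     \<longrightarrow> g a1 b1 < g a2 b2)"

datatype ordrel = OLt | OLe | OEq

text \<open>A clause: a list of disequalities x_i \<noteq> y_i and an optional literal x R y;
  its variables are tuple positions.\<close>
type_synonym clause = "(nat \<times> nat) list \<times> (nat \<times> ordrel \<times> nat) option"

fun ordrel_sem :: "ordrel \<Rightarrow> rat \<Rightarrow> rat \<Rightarrow> bool" where
  "ordrel_sem OLt a b = (a < b)"
| "ordrel_sem OLe a b = (a \<le> b)"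
| "ordrel_sem OEq a b = (a = b)"

fun clause_sat :: "clause \<Rightarrow> rat list \<Rightarrow> bool" where
  "clause_sat (ds, lit) t =
     ((\<exists>(x, y)\<in>set ds. t ! x \<noteq> t ! y) \<or>
      (case lit of None \<Rightarrow> False | Some (x, R, y) \<Rightarrow> ordrel_sem R (t ! x) (t ! y)))"

fun clause_vars :: "clause \<Rightarrow> nat set" where
  "clause_vars (ds, lit) = (\<Union>(x, y)\<in>set ds. {x, y}) \<union>
     (case lit of None \<Rightarrow> {} | Some (x, R, y) \<Rightarrow> {x, y})"

definition ord_horn_rel :: "relation \<Rightarrow> bool" where
  "ord_horn_rel r \<longleftrightarrow> (\<exists>cs :: clause list.
     (\<forall>c\<in>set cs. clause_vars c \<subseteq> {..<fst r}) \<and>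
     snd r = {t. length t = fst r \<and> (\<forall>c\<in>set cs. clause_sat c t)})"

definition ord_horn :: "relation set \<Rightarrow> bool" where
  "ord_horn \<Gamma> \<longleftrightarrow> (\<forall>r\<in>\<Gamma>. ord_horn_rel r)"

end

theory Submission
  imports Defs
begin

text \<open>
  Let R be a relation of \<Gamma> and g a pp-like operation (pp and lele are) such that both g
  and its dual preserve R; dual closure supplies whichever of the two is not assumed.
  We show that R is defined by its valid Ord-Horn clauses whose disequalities are the
  equalities of some tuple.  Let t satisfy all of them.  The clause without literal
  yields a tuple of R respecting the equalities of t, and the clauses with literal
  y \<le> x yield, for every t ! x < t ! y, such a tuple realising x < y.
  Applying the dual of g to shifted tuples puts a coordinate m below y as soon as one
  argument does, so some tuple puts m below everything that t puts above m.  Applying g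
  to that tuple (shifted to be 0 at m) and to any w keeps m below those coordinates and
  the order of w among them; adding the coordinates of t in decreasing order thus
  produces a tuple of R with the order type of t.  First-order definable relations over
  the dense order (Q;<) are closed under order types (back and forth), so t \<in> R.
\<close>

section \<open>Order types and first-order definability over (Q;<)\<close>

definition same_order_on :: "'i set \<Rightarrow> ('i \<Rightarrow> 'a::ord) \<Rightarrow> ('i \<Rightarrow> 'a) \<Rightarrow> bool" where
  "same_order_on F v v' \<longleftrightarrow> (\<forall>i\<in>F. \<forall>j\<in>F. v i < v j \<longleftrightarrow> v' i < v' j)"

lemma same_order_on_sym: "same_order_on F v v' \<Longrightarrow> same_order_on F v' v"
  unfolding same_order_on_def by blast

lemma same_order_on_subset: "same_order_on F v v' \<Longrightarrow> G \<subseteq> F \<Longrightarrow> same_order_on G v v'"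
  unfolding same_order_on_def by blast

lemma same_order_on_eq_iff:
  fixes v v' :: "'i \<Rightarrow> 'a::linorder"
  assumes "same_order_on F v v'" "i \<in> F" "j \<in> F"
  shows "v i = v j \<longleftrightarrow> v' i = v' j"
  using assms unfolding same_order_on_def by (metis linorder_neqE order.irrefl)

lemma exists_between_finite:
  fixes L U :: "'a::{dense_linorder,no_top,no_bot} set"
  assumes "finite L" "finite U" "\<forall>l\<in>L. \<forall>u\<in>U. l < u"
  shows "\<exists>a. (\<forall>l\<in>L. l < a) \<and> (\<forall>u\<in>U. a < u)"
proof (cases "L = {}"; cases "U = {}")
  assume "L = {}" "U \<noteq> {}"
  obtain a where "a < Min U" using lt_ex by blast
  then have "\<forall>u\<in>U. a < u" using Min_le[OF assms(2)] order.strict_trans2 by blast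
  then show ?thesis using \<open>L = {}\<close> by blast
next
  assume "L \<noteq> {}" "U = {}"
  obtain a where "Max L < a" using gt_ex by blast
  then have "\<forall>l\<in>L. l < a" using Max_ge[OF assms(1)] order.strict_trans1 by blast
  then show ?thesis using \<open>U = {}\<close> by blast
next
  assume "L \<noteq> {}" "U \<noteq> {}"
  then have "Max L < Min U" using assms by simp
  then obtain a where "Max L < a" "a < Min U" using dense by blast
  then show ?thesis
    using Max_ge[OF assms(1)] Min_le[OF assms(2)] order.strict_trans1 order.strict_trans2 by blast
qed auto

lemma same_order_on_extend:
  fixes v v' :: "'i \<Rightarrow> 'a::{dense_linorder,no_top,no_bot}"
  assumes "finite F" "x \<notin> F" "same_order_on F v v'"
  shows "\<exists>a'. same_order_on (insert x F) (v(x := a)) (v'(x := a'))"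
proof -
  have "\<exists>a'. \<forall>i\<in>F. (v i < a \<longleftrightarrow> v' i < a') \<and> (a < v i \<longleftrightarrow> a' < v' i)"
  proof (cases "a \<in> v ` F")
    case True
    then obtain j where "j \<in> F" "a = v j" by blast
    then show ?thesis using assms(3) unfolding same_order_on_def by blast
  next
    case False
    let ?L = "v' ` {i\<in>F. v i < a}" and ?U = "v' ` {i\<in>F. a < v i}"
    have sep: "\<forall>l\<in>?L. \<forall>u\<in>?U. l < u"
    proof (intro ballI)
      fix l u assume "l \<in> ?L" "u \<in> ?U"
      then obtain i j where "i \<in> F" "j \<in> F" "v i < v j" "l = v' i" "u = v' j"
        by (auto dest: order.strict_trans)
      then show "l < u" using assms(3) unfolding same_order_on_def by blast
    qed
    obtain a' where a': "\<forall>l\<in>?L. l < a'" "\<forall>u\<in>?U. a' < u"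
      using exists_between_finite[OF _ _ sep] assms(1) by auto
    have "(v i < a \<longleftrightarrow> v' i < a') \<and> (a < v i \<longleftrightarrow> a' < v' i)" if "i \<in> F" for i
    proof -
      have "v i < a \<or> a < v i" using False that by (metis imageI neq_iff)
      then show ?thesis using a' that by force
    qed
    then show ?thesis by blast
  qed
  then show ?thesis
    using assms(2,3) unfolding same_order_on_def by auto
qed

lemma finite_fv: "finite (fv \<phi>)"
  by (induction \<phi>) auto

lemma sat_same_order:
  "same_order_on (fv \<phi>) v v' \<Longrightarrow> sat \<phi> v = sat \<phi> v'"
proof (induction \<phi> arbitrary: v v')
  case (FEq i j)
  then show ?case using same_order_on_eq_iff[OF FEq.prems] by simp
next
  case (FConj \<phi> \<psi>)
  then show ?case by (metis same_order_on_subset Un_upper1 Un_upper2 fv.simps(4) sat.simps(4))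
next
  case (FEx x \<phi>)
  have ex_transfer: "sat (FEx x \<phi>) w \<Longrightarrow> sat (FEx x \<phi>) w'"
    if same: "same_order_on (fv \<phi> - {x}) w w'" for w w'
  proof -
    assume "sat (FEx x \<phi>) w"
    then obtain a where a: "sat \<phi> (w(x := a))" by auto
    obtain a' where "same_order_on (insert x (fv \<phi> - {x})) (w(x := a)) (w'(x := a'))"
      using same_order_on_extend[OF _ _ same] finite_fv by blast
    then have "same_order_on (fv \<phi>) (w(x := a)) (w'(x := a'))"
      by (rule same_order_on_subset) blast
    then have "sat \<phi> (w(x := a)) = sat \<phi> (w'(x := a'))"
      by (rule FEx.IH)
    then show ?thesis using a by auto
  qed
  show ?case
    using ex_transfer FEx.prems same_order_on_sym by (metis fv.simps(5))
qed (simp_all add: same_order_on_def)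

lemma fo_definable_length: "fo_definable (n, R) \<Longrightarrow> t \<in> R \<Longrightarrow> length t = n"
  unfolding fo_definable_def by auto

lemma fo_definable_same_order_mem:
  assumes "fo_definable (n, R)" "t \<in> R" "length w = n"
    and "same_order_on {..<n} (nth t) (nth w)"
  shows "w \<in> R"
proof -
  obtain \<phi> where \<phi>: "fv \<phi> \<subseteq> {..<n}" "R = {t. length t = n \<and> sat \<phi> (nth t)}"
    using assms(1) unfolding fo_definable_def by auto
  have "sat \<phi> (nth t) = sat \<phi> (nth w)"
    using same_order_on_subset[OF assms(4) \<phi>(1)] by (rule sat_same_order)
  then show ?thesis using assms(2,3) \<phi>(2) by auto
qed

lemma fo_definable_map_strict_mono:
  assumes "fo_definable (n, R)" "t \<in> R" "strict_mono h"
  shows "map h t \<in> R"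
proof -
  have "length t = n" using fo_definable_length assms(1,2) .
  then have "same_order_on {..<n} (nth t) (nth (map h t))"
    unfolding same_order_on_def using strict_mono_less[OF assms(3)] by simp
  then show ?thesis using fo_definable_same_order_mem assms(1,2) \<open>length t = n\<close> by simp
qed

section \<open>Ord-Horn clauses built from the equalities of a tuple\<close>

definition respects_eqs :: "'a list \<Rightarrow> 'b list \<Rightarrow> bool" where
  "respects_eqs t s \<longleftrightarrow> (\<forall>i<length t. \<forall>j<length t. t ! i = t ! j \<longrightarrow> s ! i = s ! j)"

definition eq_pairs :: "'a list \<Rightarrow> (nat \<times> nat) list" where
  "eq_pairs t = filter (\<lambda>(i, j). t ! i = t ! j) (List.product [0..<length t] [0..<length t])"

lemma respects_eqs_refl: "respects_eqs t t"
  unfolding respects_eqs_def by blast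

lemma respects_eqsD:
  "respects_eqs t s \<Longrightarrow> i < length t \<Longrightarrow> j < length t \<Longrightarrow> t ! i = t ! j \<Longrightarrow> s ! i = s ! j"
  unfolding respects_eqs_def by blast

lemma respects_eqs_map_combine:
  assumes "respects_eqs t u" "respects_eqs t w"
  shows "respects_eqs t (map (\<lambda>i. G (u ! i) (w ! i)) [0..<length t])"
  unfolding respects_eqs_def
proof (intro allI impI)
  fix i j assume ij: "i < length t" "j < length t" "t ! i = t ! j"
  have "u ! i = u ! j" "w ! i = w ! j"
    using respects_eqsD[OF assms(1) ij] respects_eqsD[OF assms(2) ij] .
  then show "map (\<lambda>i. G (u ! i) (w ! i)) [0..<length t] ! i = map (\<lambda>i. G (u ! i) (w ! i)) [0..<length t] ! j"
    using ij(1,2) by simp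
qed

lemma same_order_on_if_respects_eqs_strict_mono:
  fixes t w :: "'a::linorder list"
  assumes "respects_eqs t w" "\<forall>x<length t. \<forall>y<length t. t ! x < t ! y \<longrightarrow> w ! x < w ! y"
  shows "same_order_on {..<length t} (nth t) (nth w)"
  unfolding same_order_on_def
proof (intro ballI)
  fix i j assume "i \<in> {..<length t}" "j \<in> {..<length t}"
  then show "t ! i < t ! j \<longleftrightarrow> w ! i < w ! j"
    using assms unfolding respects_eqs_def by (metis lessThan_iff linorder_neqE order.asym order.irrefl)
qed

lemma ex_eq_pairs_neq_iff: "(\<exists>(i, j)\<in>set (eq_pairs t). s ! i \<noteq> s ! j) \<longleftrightarrow> \<not> respects_eqs t s"
  unfolding eq_pairs_def respects_eqs_def by auto

lemma finite_eq_pairs_image: "finite (eq_pairs ` {t. length t = n})"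
proof (rule finite_subset)
  let ?P = "List.product [0..<n] [0..<n]"
  show "eq_pairs ` {t. length t = n} \<subseteq> {ds. set ds \<subseteq> set ?P \<and> length ds \<le> length ?P}"
    unfolding eq_pairs_def by (force intro: order.trans[OF length_filter_le])
  show "finite {ds. set ds \<subseteq> set ?P \<and> length ds \<le> length ?P}"
    by (rule finite_lists_length_le) simp
qed

definition literals_over :: "nat \<Rightarrow> (nat \<times> ordrel \<times> nat) option set" where
  "literals_over n = insert None (Some ` ({..<n} \<times> UNIV \<times> {..<n}))"

lemma finite_literals_over: "finite (literals_over n)"
proof -
  have "(UNIV :: ordrel set) = {OLt, OLe, OEq}" using ordrel.exhaust by auto
  then have "finite (UNIV :: ordrel set)" by (metis finite.emptyI finite_insert)
  then show ?thesis unfolding literals_over_def by simp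
qed

lemma ord_horn_relI:
  assumes "finite C" "\<forall>c\<in>C. clause_vars c \<subseteq> {..<n}" "\<forall>s\<in>R. length s = n"
    and "\<And>t. length t = n \<Longrightarrow> t \<notin> R \<Longrightarrow> \<exists>c\<in>C. (\<forall>s\<in>R. clause_sat c s) \<and> \<not> clause_sat c t"
  shows "ord_horn_rel (n, R)"
proof -
  obtain cs where cs: "set cs = {c\<in>C. \<forall>s\<in>R. clause_sat c s}"
    using finite_list[of "{c\<in>C. \<forall>s\<in>R. clause_sat c s}"] assms(1) by auto
  have "R = {t. length t = n \<and> (\<forall>c\<in>set cs. clause_sat c t)}"
    using assms(3,4) cs by blast
  moreover have "\<forall>c\<in>set cs. clause_vars c \<subseteq> {..<n}" using assms(2) cs by auto
  ultimately show ?thesis unfolding ord_horn_rel_def by auto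
qed

lemma ord_horn_rel_eq_pairsI:
  assumes "\<forall>s\<in>R. length s = n"
    and "\<And>t. length t = n \<Longrightarrow> t \<notin> R \<Longrightarrow> \<exists>lit\<in>literals_over n.
      (\<forall>s\<in>R. clause_sat (eq_pairs t, lit) s) \<and> \<not> clause_sat (eq_pairs t, lit) t"
  shows "ord_horn_rel (n, R)"
proof (rule ord_horn_relI)
  let ?Cands = "eq_pairs ` {t :: rat list. length t = n} \<times> literals_over n"
  show "finite ?Cands" using finite_eq_pairs_image finite_literals_over by blast
  show "\<forall>c\<in>?Cands. clause_vars c \<subseteq> {..<n}"
    unfolding eq_pairs_def literals_over_def by fastforce
  show "\<exists>c\<in>?Cands. (\<forall>s\<in>R. clause_sat c s) \<and> \<not> clause_sat c t" if "length t = n" "t \<notin> R" for t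
    using assms(2)[OF that] that(1) by blast
qed (use assms(1) in blast)

lemma preserves_rel_binopD:
  assumes "preserves_rel 2 (binop g) (n, R)" "a \<in> R" "b \<in> R"
  shows "map (\<lambda>i. g (a ! i) (b ! i)) [0..<n] \<in> R"
  using assms unfolding preserves_rel_def binop_def
  by (auto dest: spec[of _ "[a, b]"])

lemma preserves_rel_cong:
  assumes "\<And>xs. length xs = m \<Longrightarrow> f xs = f' xs"
  shows "preserves_rel m f r = preserves_rel m f' r"
proof -
  have "map (\<lambda>i. f (map (\<lambda>t. t ! i) ts)) ks = map (\<lambda>i. f' (map (\<lambda>t. t ! i) ts)) ks"
    if "length ts = m" for ts ks
    using that by (intro map_cong refl assms) simp
  then show ?thesis unfolding preserves_rel_def by metis
qed

lemma preserves_dual_op_binop: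
  "preserves 2 (dual_op (binop g)) \<Gamma> = preserves 2 (binop (dual2 g)) \<Gamma>"
proof -
  have "preserves_rel 2 (dual_op (binop g)) r = preserves_rel 2 (binop (dual2 g)) r" for r
    by (rule preserves_rel_cong) (simp add: dual_op_def binop_def dual2_def)
  then show ?thesis unfolding preserves_def by blast
qed

lemma dual2_dual2 [simp]: "dual2 (dual2 g) = g"
  unfolding dual2_def by (simp add: fun_eq_iff)

lemma dually_closed_preserves_dual2:
  assumes "dually_closed \<Gamma>"
  shows "preserves 2 (binop (dual2 g)) \<Gamma> \<longleftrightarrow> preserves 2 (binop g) \<Gamma>"
proof -
  have "preserves 2 (binop g) \<Gamma> \<longleftrightarrow> preserves 2 (binop (dual2 g)) \<Gamma>" for g
    using assms preserves_dual_op_binop unfolding dually_closed_def by (metis one_le_numeral)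
  then show ?thesis by simp
qed

text \<open>The only properties of pp and lele that the proof uses.\<close>
definition pp_like :: "(rat \<Rightarrow> rat \<Rightarrow> rat) \<Rightarrow> bool" where
  "pp_like g \<longleftrightarrow>
     (\<forall>a1 a2 b1 b2. a1 \<le> 0 \<and> 0 < a2 \<longrightarrow> g a1 b1 < g a2 b2) \<and>
     (\<forall>a1 a2 b1 b2. 0 < a1 \<and> 0 < a2 \<and> b1 < b2 \<longrightarrow> g a1 b1 < g a2 b2)"

lemma is_pp_imp_pp_like: "is_pp g \<Longrightarrow> pp_like g"
  unfolding is_pp_def pp_like_def by (meson not_le order.strict_implies_order)

lemma is_lele_imp_pp_like: "is_lele g \<Longrightarrow> pp_like g"
  unfolding is_lele_def pp_like_def by (meson le_less_trans)

lemma pp_like_nonpos_pos: "pp_like g \<Longrightarrow> a1 \<le> 0 \<Longrightarrow> 0 < a2 \<Longrightarrow> g a1 b1 < g a2 b2"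
  unfolding pp_like_def by blast

lemma pp_like_pos_pos: "pp_like g \<Longrightarrow> 0 < a1 \<Longrightarrow> 0 < a2 \<Longrightarrow> b1 < b2 \<Longrightarrow> g a1 b1 < g a2 b2"
  unfolding pp_like_def by blast

section \<open>Relations preserved by a pp-like operation and its dual\<close>

locale pp_like_closed =
  fixes n :: nat and R :: "rat list set" and g :: "rat \<Rightarrow> rat \<Rightarrow> rat"
  assumes fo_definable: "fo_definable (n, R)"
    and pp_like: "pp_like g"
    and closed: "preserves_rel 2 (binop g) (n, R)"
    and closed_dual: "preserves_rel 2 (binop (dual2 g)) (n, R)"
begin

lemma length_mem: "s \<in> R \<Longrightarrow> length s = n"
  using fo_definable_length fo_definable .

lemma combination_mem:
  assumes "u \<in> R" "w \<in> R" "strict_mono h" "G = g \<or> G = dual2 g"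
  shows "map (\<lambda>i. G (h (u ! i)) (w ! i)) [0..<n] \<in> R"
proof -
  have "map h u \<in> R" using fo_definable_map_strict_mono fo_definable assms(1,3) .
  then have "map (\<lambda>i. G (map h u ! i) (w ! i)) [0..<n] \<in> R"
    using assms(2,4) preserves_rel_binopD closed closed_dual by blast
  moreover have "map (\<lambda>i. G (map h u ! i) (w ! i)) [0..<n] = map (\<lambda>i. G (h (u ! i)) (w ! i)) [0..<n]"
    using length_mem[OF assms(1)] by simp
  ultimately show ?thesis by simp
qed

lemma lift_combination:
  assumes "u \<in> R" "w \<in> R" "respects_eqs t u" "respects_eqs t w" "length t = n" "m < n"
  shows "\<exists>s\<in>R. respects_eqs t s \<and> (\<forall>y<n. u ! m < u ! y \<longrightarrow> s ! m < s ! y) \<and>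
    (\<forall>x<n. \<forall>y<n. u ! m < u ! x \<and> u ! m < u ! y \<and> w ! x < w ! y \<longrightarrow> s ! x < s ! y)"
proof -
  define s where "s = map (\<lambda>i. g (u ! i - u ! m) (w ! i)) [0..<n]"
  have "s \<in> R"
    unfolding s_def using combination_mem[OF assms(1,2), of "\<lambda>a. a - u ! m"]
    by (simp add: strict_mono_def)
  moreover have "respects_eqs t s"
    unfolding s_def using respects_eqs_map_combine[OF assms(3,4)] assms(5) by simp
  moreover have "s ! i = g (u ! i - u ! m) (w ! i)" if "i < n" for i
    unfolding s_def using that by simp
  ultimately show ?thesis using assms(6) pp_like_nonpos_pos[OF pp_like] pp_like_pos_pos[OF pp_like]
    by auto
qed

lemma dual_combination:
  assumes "u \<in> R" "w \<in> R" "respects_eqs t u" "respects_eqs t w" "length t = n" "m < n"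
  shows "\<exists>s\<in>R. respects_eqs t s \<and> (\<forall>y<n. u ! m < u ! y \<or> w ! m < w ! y \<longrightarrow> s ! m < s ! y)"
proof -
  \<comment> \<open>h sends u ! m to -1 and exactly the entries above u ! m to positive values.\<close>
  define h where "h a = (if a \<le> u ! m then a - u ! m - 1 else a - u ! m)" for a
  define s where "s = map (\<lambda>i. dual2 g (h (u ! i)) (w ! i)) [0..<n]"
  have "strict_mono h" unfolding strict_mono_def h_def by auto
  then have "s \<in> R" unfolding s_def using combination_mem[OF assms(1,2)] by blast
  moreover have "respects_eqs t s"
    unfolding s_def using respects_eqs_map_combine[OF assms(3,4)] assms(5) by simp
  moreover have "s ! m < s ! y" if "y < n" "u ! m < u ! y \<or> w ! m < w ! y" for y
  proof -
    have "g (- h (u ! y)) (- w ! y) < g (- h (u ! m)) (- w ! m)"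
    proof (cases "u ! m < u ! y")
      case True
      then show ?thesis using pp_like_nonpos_pos[OF pp_like] by (simp add: h_def)
    next
      case False
      then show ?thesis using that(2) pp_like_pos_pos[OF pp_like] by (simp add: h_def)
    qed
    then show ?thesis unfolding s_def dual2_def using that(1) assms(6) by simp
  qed
  ultimately show ?thesis by blast
qed

context
  fixes t :: "rat list"
  assumes length_t: "length t = n"
    and respecting_nonempty: "\<exists>s\<in>R. respects_eqs t s"
    and separable: "\<And>x y. x < n \<Longrightarrow> y < n \<Longrightarrow> t ! x < t ! y \<Longrightarrow> \<exists>s\<in>R. respects_eqs t s \<and> s ! x < s ! y"
begin

lemma exists_below_all:
  assumes "m < n"
  shows "\<exists>s\<in>R. respects_eqs t s \<and> (\<forall>y<n. t ! m < t ! y \<longrightarrow> s ! m < s ! y)"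
proof -
  let ?A = "{y. y < n \<and> t ! m < t ! y}"
  have "\<exists>s\<in>R. respects_eqs t s \<and> (\<forall>y\<in>S. s ! m < s ! y)" if "S \<subseteq> ?A" for S
  proof -
    have "finite S" using that by (rule finite_subset) simp
    then show ?thesis using that
    proof (induction rule: finite_subset_induct')
      case empty
      then show ?case using respecting_nonempty by blast
    next
      case (insert z S)
      obtain s where s: "s \<in> R" "respects_eqs t s" "\<forall>y\<in>S. s ! m < s ! y"
        using insert.IH by blast
      obtain s' where s': "s' \<in> R" "respects_eqs t s'" "s' ! m < s' ! z"
        using separable assms insert.hyps(2) by blast
      obtain r where r: "r \<in> R" "respects_eqs t r"
        "\<forall>y<n. s' ! m < s' ! y \<or> s ! m < s ! y \<longrightarrow> r ! m < r ! y"
        using dual_combination[OF s'(1) s(1) s'(2) s(2) length_t assms] by blast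
      have "\<forall>y\<in>insert z S. r ! m < r ! y"
        using r(3) s(3) s'(3) insert.hyps(2,3) by auto
      then show ?case using r(1,2) by blast
    qed
  qed
  then show ?thesis by blast
qed

lemma strict_embedding_insert:
  assumes z: "z < n" and S: "S \<subseteq> {..<n}" and z_min: "\<And>y. y \<in> S \<Longrightarrow> t ! z \<le> t ! y"
    and w: "w \<in> R" "respects_eqs t w" "\<forall>x\<in>S. \<forall>y\<in>S. t ! x < t ! y \<longrightarrow> w ! x < w ! y"
  shows "\<exists>r\<in>R. respects_eqs t r \<and> (\<forall>x\<in>insert z S. \<forall>y\<in>insert z S. t ! x < t ! y \<longrightarrow> r ! x < r ! y)"
proof -
  obtain u where u: "u \<in> R" "respects_eqs t u" "\<forall>y<n. t ! z < t ! y \<longrightarrow> u ! z < u ! y"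
    using exists_below_all[OF z] by blast
  obtain r where r: "r \<in> R" "respects_eqs t r" "\<forall>y<n. u ! z < u ! y \<longrightarrow> r ! z < r ! y"
    "\<forall>x<n. \<forall>y<n. u ! z < u ! x \<and> u ! z < u ! y \<and> w ! x < w ! y \<longrightarrow> r ! x < r ! y"
    using lift_combination[OF u(1) w(1) u(2) w(2) length_t z] by blast
  have "r ! x < r ! y" if "x \<in> insert z S" "y \<in> insert z S" "t ! x < t ! y" for x y
  proof (cases "x = z")
    case True
    then show ?thesis using that S z u(3) r(3) by auto
  next
    case False
    then have "x \<in> S" using that(1) by simp
    then have "t ! z < t ! y" using z_min that(3) by (meson order.strict_trans1)
    then have "y \<in> S" using that(2) by auto
    have "x < n" "y < n" using \<open>x \<in> S\<close> \<open>y \<in> S\<close> S by auto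
    have "u ! z < u ! y" using u(3) \<open>y < n\<close> \<open>t ! z < t ! y\<close> by blast
    have "w ! x < w ! y" using w(3) \<open>x \<in> S\<close> \<open>y \<in> S\<close> that(3) by blast
    show ?thesis
    proof (cases "t ! x = t ! z")
      case True
      then have "r ! x = r ! z" using respects_eqsD[OF r(2), of x z] \<open>x < n\<close> z length_t by metis
      then show ?thesis using r(3) \<open>y < n\<close> \<open>u ! z < u ! y\<close> by auto
    next
      case False
      then have "u ! z < u ! x" using z_min[OF \<open>x \<in> S\<close>] u(3) \<open>x < n\<close> by auto
      then show ?thesis
        using r(4) \<open>x < n\<close> \<open>y < n\<close> \<open>u ! z < u ! y\<close> \<open>w ! x < w ! y\<close> by blast
    qed
  qed
  then show ?thesis using r(1,2) by blast
qed

lemma exists_strict_embedding: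
  "\<exists>w\<in>R. respects_eqs t w \<and> (\<forall>x<n. \<forall>y<n. t ! x < t ! y \<longrightarrow> w ! x < w ! y)"
proof -
  have "S \<subseteq> {..<n} \<longrightarrow> (\<exists>w\<in>R. respects_eqs t w \<and> (\<forall>x\<in>S. \<forall>y\<in>S. t ! x < t ! y \<longrightarrow> w ! x < w ! y))"
    if "finite S" for S
    using that
  proof (induction rule: finite_ranking_induct[where f = "\<lambda>i. - (t ! i)"])
    case empty
    then show ?case using respecting_nonempty by blast
  next
    case (insert z S)
    show ?case
    proof
      assume zS: "insert z S \<subseteq> {..<n}"
      then obtain w where "w \<in> R" "respects_eqs t w" "\<forall>x\<in>S. \<forall>y\<in>S. t ! x < t ! y \<longrightarrow> w ! x < w ! y"
        using insert.IH by blast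
      moreover have "z < n" "S \<subseteq> {..<n}" "\<And>y. y \<in> S \<Longrightarrow> t ! z \<le> t ! y"
        using zS insert.hyps(2) by auto
      ultimately show "\<exists>w\<in>R. respects_eqs t w \<and>
          (\<forall>x\<in>insert z S. \<forall>y\<in>insert z S. t ! x < t ! y \<longrightarrow> w ! x < w ! y)"
        using strict_embedding_insert by blast
    qed
  qed
  from this[OF finite_lessThan] obtain w where
    "w \<in> R" "respects_eqs t w" "\<forall>x\<in>{..<n}. \<forall>y\<in>{..<n}. t ! x < t ! y \<longrightarrow> w ! x < w ! y"
    by blast
  then show ?thesis by auto
qed

lemma mem_if_separable: "t \<in> R"
proof -
  obtain w where w: "w \<in> R" "respects_eqs t w" "\<forall>x<n. \<forall>y<n. t ! x < t ! y \<longrightarrow> w ! x < w ! y"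
    using exists_strict_embedding by blast
  then have "same_order_on {..<n} (nth w) (nth t)"
    using same_order_on_if_respects_eqs_strict_mono[of t w] length_t same_order_on_sym by metis
  then show ?thesis using fo_definable_same_order_mem[OF fo_definable w(1) length_t] by blast
qed

end

lemma separating_literal:
  assumes "length t = n" "t \<notin> R"
  shows "\<exists>lit\<in>literals_over n. (\<forall>s\<in>R. clause_sat (eq_pairs t, lit) s) \<and> \<not> clause_sat (eq_pairs t, lit) t"
proof -
  have sat_iff: "clause_sat (eq_pairs t, lit) s \<longleftrightarrow> \<not> respects_eqs t s \<or>
      (case lit of None \<Rightarrow> False | Some (x, rel, y) \<Rightarrow> ordrel_sem rel (s ! x) (s ! y))" for lit s
    using ex_eq_pairs_neq_iff[of t s] by auto
  consider (no_respecting) "\<not> (\<exists>s\<in>R. respects_eqs t s)"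
    | (inseparable) x y where "x < n" "y < n" "t ! x < t ! y" "\<forall>s\<in>R. respects_eqs t s \<longrightarrow> s ! y \<le> s ! x"
    using mem_if_separable[OF assms(1)] assms(2) by (meson not_le)
  then show ?thesis
  proof cases
    case no_respecting
    then show ?thesis
      using respects_eqs_refl[of t] unfolding sat_iff literals_over_def
      by (intro bexI[of _ None]) auto
  next
    case inseparable
    then show ?thesis
      using respects_eqs_refl[of t] unfolding sat_iff literals_over_def
      by (intro bexI[of _ "Some (y, OLe, x)"]) auto
  qed
qed

lemma ord_horn_rel: "ord_horn_rel (n, R)"
  by (rule ord_horn_rel_eq_pairsI[OF _ separating_literal]) (auto intro: length_mem)

end

theorem lemma4p5:
  fixes \<Gamma> :: "relation set"
  assumes "temporal_language \<Gamma>"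
    and "dually_closed \<Gamma>"
    and "(\<exists>g. is_pp g \<and> preserves 2 (binop g) \<Gamma>) \<or>
         (\<exists>g. is_pp g \<and> preserves 2 (binop (dual2 g)) \<Gamma>) \<or>
         (\<exists>g. is_lele g \<and> preserves 2 (binop g) \<Gamma>) \<or>
         (\<exists>g. is_lele g \<and> preserves 2 (binop (dual2 g)) \<Gamma>)"
  shows "dually_closed \<Gamma> \<and> ord_horn \<Gamma>"
proof -
  obtain g where g: "pp_like g" "preserves 2 (binop g) \<Gamma>" "preserves 2 (binop (dual2 g)) \<Gamma>"
    using assms(3) dually_closed_preserves_dual2[OF assms(2)] is_pp_imp_pp_like is_lele_imp_pp_like
    by metis
  have "ord_horn_rel (n, R)" if "(n, R) \<in> \<Gamma>" for n R
  proof -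
    interpret pp_like_closed n R g
      using that assms(1) g unfolding temporal_language_def preserves_def
      by unfold_locales blast+
    show ?thesis by (rule ord_horn_rel)
  qed
  then show ?thesis using assms(2) unfolding ord_horn_def by auto
qed

end
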